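(* Consider the $3$-SAT Hamiltonian in Ising spins $\sigma_i\in\{\pm1\}$, $$\mathcal{H}=\frac{M}{8}-\sum_{i=1}^N H_i\sigma_i-\sum_{i<j}T_{ij}\sigma_i\sigma_j-\sum_{i<j<k}J_{ijk}\sigma_i\sigma_j\sigma_k .$$ A quadratic penalty formulation of this Hamiltonian is not possible in Ising spins; precisely, there is no real polynomial $p(\sigma_j,\sigma_k,y)$ in three variables with $\deg p\le 2$ such that (P.1) $p(\sigma_j,\sigma_k,y)\ge 0$ for all $(\sigma_j,\sigma_k,y)\in\{\pm1\}^3$, and (P.2) for $(\sigma_j,\sigma_k,y)\in\{\pm1\}^3$, $p(\sigma_j,\sigma_k,y)=0$ if and only if $\sigma_j\sigma_k=y$. Hence the cubic terms $\sigma_i\sigma_j\sigma_k$ cannot be replaced by $\sigma_i y_{jk}$ with an ancillary spin $y_{jk}\in\{\pm1\}$ enforced by such a quadratic penalty.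
   Context: The $3$-SAT instance has $M$ clauses $C_1,\dots,C_M$ and $N$ variables represented as Ising spins $\sigma_i\in\{\pm1\}$; $c_{\mu,i}=1$ if $\sigma_i$ appears in clause $C_\mu$ and $c_{\mu,i}=-1$ otherwise, and $H_i=\frac18\sum_\mu c_{\mu,i}$, $T_{ij}=-\frac18\sum_\mu c_{\mu,i}c_{\mu,j}$, $J_{ijk}=\frac18\sum_\mu c_{\mu,i}c_{\mu,j}c_{\mu,k}$. A quadratic penalty formulation means introducing, for pairs $(j,k)$, ancillary spins $y_{jk}\in\{\pm1\}$, constants $\mu_k\ge0$ and penalty functions $p_k$ of degree at most $2$ satisfying (P.1) and (P.2), and replacing $\sum J_{ijk}\sigma_i\sigma_j\sigma_k$ by $\sum J_{ijk}\sigma_i y_{jk}+\sum_k\mu_k p_k(\sigma_j,\sigma_k,y_{jk})$. *)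

theory Defs
  imports Complex_Main
begin

definition poly3_deg_le2 :: "(real \<Rightarrow> real \<Rightarrow> real \<Rightarrow> real) \<Rightarrow> bool" where
  "poly3_deg_le2 p \<longleftrightarrow>
     (\<exists>c a1 a2 a3 b11 b22 b33 b12 b13 b23 :: real.
        \<forall>x y z. p x y z = c + a1 * x + a2 * y + a3 * z
                         + b11 * x^2 + b22 * y^2 + b33 * z^2
                         + b12 * x * y + b13 * x * z + b23 * y * z)"

definition spins :: "real set" where
  "spins = {-1, 1}"

end

theory Submission
  imports Defs
begin

text \<open>On the cube \<open>{-1,1}\<^sup>3\<close> squares equal 1, and every multilinear monomial of degree
  at most 2 has the same sum over the points with \<open>x y z = 1\<close> as over those with
  \<open>x y z = -1\<close>; only \<open>x y z\<close> tells the two halves apart. A penalty as required would vanish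
  on the first half and be positive on the second, so these two sums would differ.\<close>

lemma poly3_deg_le2_parity_sums_eq:
  assumes "poly3_deg_le2 p"
  shows "p 1 1 1 + p 1 (-1) (-1) + p (-1) 1 (-1) + p (-1) (-1) 1
       = p 1 1 (-1) + p 1 (-1) 1 + p (-1) 1 1 + p (-1) (-1) (-1)"
proof -
  from assms obtain c a1 a2 a3 b11 b22 b33 b12 b13 b23 :: real where
    "\<And>x y z. p x y z = c + a1 * x + a2 * y + a3 * z
                     + b11 * x^2 + b22 * y^2 + b33 * z^2
                     + b12 * x * y + b13 * x * z + b23 * y * z"
    unfolding poly3_deg_le2_def by blast
  then show ?thesis by simp
qed

theorem theorem3:
  shows "\<not> (\<exists>p. poly3_deg_le2 p
              \<and> (\<forall>sj\<in>spins. \<forall>sk\<in>spins. \<forall>y\<in>spins. p sj sk y \<ge> 0)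
              \<and> (\<forall>sj\<in>spins. \<forall>sk\<in>spins. \<forall>y\<in>spins. (p sj sk y = 0 \<longleftrightarrow> sj * sk = y)))"
proof
  assume "\<exists>p. poly3_deg_le2 p
              \<and> (\<forall>sj\<in>spins. \<forall>sk\<in>spins. \<forall>y\<in>spins. p sj sk y \<ge> 0)
              \<and> (\<forall>sj\<in>spins. \<forall>sk\<in>spins. \<forall>y\<in>spins. (p sj sk y = 0 \<longleftrightarrow> sj * sk = y))"
  then obtain p where deg: "poly3_deg_le2 p"
    and nonneg: "\<forall>sj\<in>spins. \<forall>sk\<in>spins. \<forall>y\<in>spins. p sj sk y \<ge> 0"
    and zeros: "\<forall>sj\<in>spins. \<forall>sk\<in>spins. \<forall>y\<in>spins. (p sj sk y = 0 \<longleftrightarrow> sj * sk = y)"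
    by blast
  have spin_values: "(1::real) \<in> spins" "(-1::real) \<in> spins"
    by (auto simp: spins_def)
  have "p 1 1 1 = 0" "p 1 (-1) (-1) = 0" "p (-1) 1 (-1) = 0" "p (-1) (-1) 1 = 0"
    using zeros spin_values by auto
  moreover have "p 1 1 (-1) > 0" "p 1 (-1) 1 > 0" "p (-1) 1 1 > 0" "p (-1) (-1) (-1) > 0"
    using zeros nonneg spin_values by (force simp: order_less_le)+
  ultimately show False
    using poly3_deg_le2_parity_sums_eq [OF deg] by linarith
qed

end
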